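(* Let $\mathbf{C}$ be a positively graded $\Bbbk$-linear category and let $(\mathcal{X}^\bullet,d^\bullet)$ be a minimal complex of graded $\mathbf{C}$-modules each of whose components is a direct sum of modules of the form $\mathsf{P}(\lambda)\langle k\rangle$, $\lambda\in\operatorname{Ob}(\mathbf{C})$, $k\in\mathbb{Z}$. For $i,j\in\mathbb{Z}$ write $\mathcal{X}^j=\mathcal{X}\{>i\}^j\oplus\mathcal{X}\{=i\}^j\oplus\mathcal{X}\{<i\}^j$, where $\mathcal{X}\{>i\}^j$ (resp. $\mathcal{X}\{=i\}^j$, $\mathcal{X}\{<i\}^j$) is the sum of the indecomposable summands isomorphic to some $\mathsf{P}(\lambda)\langle k\rangle$ with $k>i$ (resp. $k=i$, $k<i$). Then for all $i,j\in\mathbb{Z}$ we have $d^j(\mathcal{X}\{>i\}^j)\subseteq\mathcal{X}\{>i+1\}^{j+1}$.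
   Context: $\Bbbk$ is a field. $\mathbf{C}$ positively graded means: morphism spaces are $\mathbb{Z}$-graded with composition adding degrees, $\mathbf{C}_i(\lambda,\mu)=0$ for $i<0$, $\mathbf{C}_0(\lambda,\mu)=0$ for $\lambda\ne\mu$ and $\mathbf{C}_0(\lambda,\lambda)=\Bbbk e_\lambda$, all $\mathbf{C}_i(\lambda,\mu)$ finite-dimensional, and for each $\lambda,i$ only finitely many $\mu$ with $\mathbf{C}_i(\lambda,\mu)\ne0$ or $\mathbf{C}_i(\mu,\lambda)\ne0$. Graded $\mathbf{C}$-modules are $\Bbbk$-linear functors from $\mathbf{C}$ to graded vector spaces sending degree-$k$ morphisms to degree-$k$ maps; $\mathsf{M}\langle i\rangle(\lambda)_j=\mathsf{M}(\lambda)_{i+j}$; $\mathsf{P}(\lambda)=\mathbf{C}(\lambda,-)$. A complex is minimal if it has no direct summand of the form $\cdots\to0\to\mathsf{M}\xrightarrow{\sim}\mathsf{M}\to0\to\cdots$. *)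

theory Defs
  imports Main "HOL.Vector_Spaces"
begin

text \<open>
A graded k-linear category C with object type 'o is given by its
homogeneous morphism spaces  Cm la mu i = C_i(la,mu)  (subspaces of an ambient
k-vector space 'm with scalar multiplication sC), a composition
cmp la mu nu g f = g \<circ> f  (f : la \<rightarrow> mu, g : mu \<rightarrow> nu) and identities e la.
The full morphism space is the direct sum of the homogeneous pieces.
A graded C-module is given by its homogeneous pieces M la n = M(la)_n (subspaces
of an ambient k-vector space 'v with scalar multiplication sV) and the action
act la mu f : M(la)_n \<rightarrow> M(mu)_{n+i} of homogeneous f in C_i(la,mu).
\<close>

definition lin_on :: "('k::field \<Rightarrow> 'a::ab_group_add \<Rightarrow> 'a) \<Rightarrow> ('k \<Rightarrow> 'b::ab_group_add \<Rightarrow> 'b)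
    \<Rightarrow> 'a set \<Rightarrow> 'b set \<Rightarrow> ('a \<Rightarrow> 'b) \<Rightarrow> bool" where
  "lin_on s1 s2 A B f \<longleftrightarrow>
     (\<forall>x\<in>A. f x \<in> B) \<and> (\<forall>x\<in>A. \<forall>y\<in>A. f (x + y) = f x + f y) \<and>
     (\<forall>c. \<forall>x\<in>A. f (s1 c x) = s2 c (f x))"

definition fin_dim_sub :: "('k::field \<Rightarrow> 'a::ab_group_add \<Rightarrow> 'a) \<Rightarrow> 'a set \<Rightarrow> bool" where
  "fin_dim_sub s A \<longleftrightarrow> (\<exists>F. finite F \<and> F \<subseteq> A \<and> module.span s F = A)"

definition pos_graded_cat ::
  "('k::field \<Rightarrow> 'm::ab_group_add \<Rightarrow> 'm) \<Rightarrow> ('o \<Rightarrow> 'o \<Rightarrow> int \<Rightarrow> 'm set)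
   \<Rightarrow> ('o \<Rightarrow> 'o \<Rightarrow> 'o \<Rightarrow> 'm \<Rightarrow> 'm \<Rightarrow> 'm) \<Rightarrow> ('o \<Rightarrow> 'm) \<Rightarrow> bool" where
  "pos_graded_cat sC Cm cmp e \<longleftrightarrow>
     vector_space sC \<and>
     (\<forall>la mu i. module.subspace sC (Cm la mu i)) \<and>
     (\<forall>la mu nu i i' f g. f \<in> Cm la mu i \<longrightarrow> g \<in> Cm mu nu i' \<longrightarrow> cmp la mu nu g f \<in> Cm la nu (i + i')) \<and>
     (\<forall>la mu nu i i' g. g \<in> Cm mu nu i' \<longrightarrow> lin_on sC sC (Cm la mu i) (Cm la nu (i + i')) (\<lambda>f. cmp la mu nu g f)) \<and>
     (\<forall>la mu nu i i' f. f \<in> Cm la mu i \<longrightarrow> lin_on sC sC (Cm mu nu i') (Cm la nu (i + i')) (\<lambda>g. cmp la mu nu g f)) \<and>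
     (\<forall>la mu nu rh i i' i'' f g h. f \<in> Cm la mu i \<longrightarrow> g \<in> Cm mu nu i' \<longrightarrow> h \<in> Cm nu rh i'' \<longrightarrow>
        cmp la nu rh h (cmp la mu nu g f) = cmp la mu rh (cmp mu nu rh h g) f) \<and>
     (\<forall>la. e la \<in> Cm la la 0) \<and>
     (\<forall>la mu i f. f \<in> Cm la mu i \<longrightarrow> cmp la la mu f (e la) = f \<and> cmp la mu mu (e mu) f = f) \<and>
     (\<forall>la mu i. i < 0 \<longrightarrow> Cm la mu i = {0}) \<and>
     (\<forall>la mu. la \<noteq> mu \<longrightarrow> Cm la mu 0 = {0}) \<and>
     (\<forall>la. Cm la la 0 = range (\<lambda>c. sC c (e la))) \<and>
     (\<forall>la mu i. fin_dim_sub sC (Cm la mu i)) \<and>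
     (\<forall>la i. finite {mu. Cm la mu i \<noteq> {0}} \<and> finite {mu. Cm mu la i \<noteq> {0}})"

definition graded_module ::
  "('k::field \<Rightarrow> 'm::ab_group_add \<Rightarrow> 'm) \<Rightarrow> ('o \<Rightarrow> 'o \<Rightarrow> int \<Rightarrow> 'm set)
   \<Rightarrow> ('o \<Rightarrow> 'o \<Rightarrow> 'o \<Rightarrow> 'm \<Rightarrow> 'm \<Rightarrow> 'm) \<Rightarrow> ('o \<Rightarrow> 'm)
   \<Rightarrow> ('k \<Rightarrow> 'v::ab_group_add \<Rightarrow> 'v) \<Rightarrow> ('o \<Rightarrow> int \<Rightarrow> 'v set) \<Rightarrow> ('o \<Rightarrow> 'o \<Rightarrow> 'm \<Rightarrow> 'v \<Rightarrow> 'v) \<Rightarrow> bool" where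
  "graded_module sC Cm cmp e sV M act \<longleftrightarrow>
     (\<forall>la n. module.subspace sV (M la n)) \<and>
     (\<forall>la mu i n f. f \<in> Cm la mu i \<longrightarrow> lin_on sV sV (M la n) (M mu (n + i)) (act la mu f)) \<and>
     (\<forall>la mu i n v. v \<in> M la n \<longrightarrow> lin_on sC sV (Cm la mu i) (M mu (n + i)) (\<lambda>f. act la mu f v)) \<and>
     (\<forall>la n v. v \<in> M la n \<longrightarrow> act la la (e la) v = v) \<and>
     (\<forall>la mu nu i i' n f g v. f \<in> Cm la mu i \<longrightarrow> g \<in> Cm mu nu i' \<longrightarrow> v \<in> M la n \<longrightarrow>
        act la nu (cmp la mu nu g f) v = act mu nu g (act la mu f v))"

definition gmod_hom ::
  "('k::field \<Rightarrow> 'm::ab_group_add \<Rightarrow> 'm) \<Rightarrow> ('o \<Rightarrow> 'o \<Rightarrow> int \<Rightarrow> 'm set)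
   \<Rightarrow> ('k \<Rightarrow> 'v::ab_group_add \<Rightarrow> 'v) \<Rightarrow> ('o \<Rightarrow> int \<Rightarrow> 'v set) \<Rightarrow> ('o \<Rightarrow> 'o \<Rightarrow> 'm \<Rightarrow> 'v \<Rightarrow> 'v)
   \<Rightarrow> ('k \<Rightarrow> 'w::ab_group_add \<Rightarrow> 'w) \<Rightarrow> ('o \<Rightarrow> int \<Rightarrow> 'w set) \<Rightarrow> ('o \<Rightarrow> 'o \<Rightarrow> 'm \<Rightarrow> 'w \<Rightarrow> 'w)
   \<Rightarrow> ('o \<Rightarrow> 'v \<Rightarrow> 'w) \<Rightarrow> bool" where
  "gmod_hom sC Cm sV M actM sW N actN \<phi> \<longleftrightarrow>
     (\<forall>la n. lin_on sV sW (M la n) (N la n) (\<phi> la)) \<and>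
     (\<forall>la mu i n f v. f \<in> Cm la mu i \<longrightarrow> v \<in> M la n \<longrightarrow> \<phi> mu (actM la mu f v) = actN la mu f (\<phi> la v))"

definition gmod_iso where
  "gmod_iso sC Cm sV M actM sW N actN \<phi> \<longleftrightarrow>
     gmod_hom sC Cm sV M actM sW N actN \<phi> \<and> (\<forall>la n. bij_betw (\<phi> la) (M la n) (N la n))"

definition gsubmodule ::
  "('o \<Rightarrow> 'o \<Rightarrow> int \<Rightarrow> 'm set) \<Rightarrow> ('k::field \<Rightarrow> 'v::ab_group_add \<Rightarrow> 'v) \<Rightarrow> ('o \<Rightarrow> int \<Rightarrow> 'v set)
   \<Rightarrow> ('o \<Rightarrow> 'o \<Rightarrow> 'm \<Rightarrow> 'v \<Rightarrow> 'v) \<Rightarrow> ('o \<Rightarrow> int \<Rightarrow> 'v set) \<Rightarrow> bool" where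
  "gsubmodule Cm sV M act S \<longleftrightarrow>
     (\<forall>la n. module.subspace sV (S la n) \<and> S la n \<subseteq> M la n) \<and>
     (\<forall>la mu i n f v. f \<in> Cm la mu i \<longrightarrow> v \<in> S la n \<longrightarrow> act la mu f v \<in> S mu (n + i))"

text \<open>The shifted representable module P(la)\<langle>k\<rangle>: P(la)\<langle>k\<rangle>(mu)_n = C_{k+n}(la,mu),
  with action by postcomposition.\<close>
definition Pshift :: "('o \<Rightarrow> 'o \<Rightarrow> int \<Rightarrow> 'm set) \<Rightarrow> 'o \<Rightarrow> int \<Rightarrow> 'o \<Rightarrow> int \<Rightarrow> 'm set" where
  "Pshift Cm la k mu n = Cm la mu (k + n)"

definition Pact :: "('o \<Rightarrow> 'o \<Rightarrow> 'o \<Rightarrow> 'm \<Rightarrow> 'm \<Rightarrow> 'm) \<Rightarrow> 'o \<Rightarrow> 'o \<Rightarrow> 'o \<Rightarrow> 'm \<Rightarrow> 'm \<Rightarrow> 'm" where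
  "Pact cmp la mu nu g x = cmp la mu nu g x"

definition internal_dsum ::
  "('k::field \<Rightarrow> 'v::ab_group_add \<Rightarrow> 'v) \<Rightarrow> 'v set \<Rightarrow> ('b \<Rightarrow> 'v set) \<Rightarrow> 'b set \<Rightarrow> bool" where
  "internal_dsum s V F I \<longleftrightarrow>
     (\<forall>b\<in>I. module.subspace s (F b) \<and> F b \<subseteq> V) \<and>
     V = module.span s (\<Union>b\<in>I. F b) \<and>
     (\<forall>J u. finite J \<longrightarrow> J \<subseteq> I \<longrightarrow> (\<forall>b\<in>J. u b \<in> F b) \<longrightarrow> (\<Sum>b\<in>J. u b) = 0 \<longrightarrow> (\<forall>b\<in>J. u b = 0))"

definition gcomplex where
  "gcomplex sC Cm cmp e sV X actX d \<longleftrightarrow>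
     (\<forall>j. graded_module sC Cm cmp e sV (X j) (actX j)) \<and>
     (\<forall>j. gmod_hom sC Cm sV (X j) (actX j) sV (X (j + 1)) (actX (j + 1)) (d j)) \<and>
     (\<forall>j la n v. v \<in> X j la n \<longrightarrow> d (j + 1) la (d j la v) = 0)"

text \<open>Minimal complex: no (nonzero) direct summand (as complexes) of the form
  \<dots> \<rightarrow> 0 \<rightarrow> M \<rightarrow> M \<rightarrow> 0 \<rightarrow> \<dots> with the middle map an isomorphism.\<close>
definition minimal_complex where
  "minimal_complex Cm sV X actX d \<longleftrightarrow>
     \<not> (\<exists>Y Z j0.
          (\<forall>j. gsubmodule Cm sV (X j) (actX j) (Y j) \<and> gsubmodule Cm sV (X j) (actX j) (Z j)) \<and>
          (\<forall>j mu n. Y j mu n \<inter> Z j mu n = {0} \<and>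
                    X j mu n = {y + z | y z. y \<in> Y j mu n \<and> z \<in> Z j mu n}) \<and>
          (\<forall>j mu n v. (v \<in> Y j mu n \<longrightarrow> d j mu v \<in> Y (j + 1) mu n) \<and>
                      (v \<in> Z j mu n \<longrightarrow> d j mu v \<in> Z (j + 1) mu n)) \<and>
          (\<forall>j mu n. j \<noteq> j0 \<and> j \<noteq> j0 + 1 \<longrightarrow> Y j mu n = {0}) \<and>
          (\<forall>mu n. bij_betw (d j0 mu) (Y j0 mu n) (Y (j0 + 1) mu n)) \<and>
          (\<exists>mu n. Y j0 mu n \<noteq> {0}))"

text \<open>X{>i}^j: the sum of the chosen summands S j b \<cong> P(lab j b)\<langle>sh j b\<rangle> with sh j b > i.\<close>
definition part_gt ::
  "('k::field \<Rightarrow> 'v::ab_group_add \<Rightarrow> 'v) \<Rightarrow> (int \<Rightarrow> 'b set) \<Rightarrow> (int \<Rightarrow> 'b \<Rightarrow> 'o \<Rightarrow> int \<Rightarrow> 'v set)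
   \<Rightarrow> (int \<Rightarrow> 'b \<Rightarrow> int) \<Rightarrow> int \<Rightarrow> int \<Rightarrow> 'o \<Rightarrow> int \<Rightarrow> 'v set" where
  "part_gt sV B S sh j i mu n = module.span sV (\<Union>b\<in>{b \<in> B j. sh j b > i}. S j b mu n)"

end

theory Submission
  imports Defs
begin

(* Let x be the generator of a summand P(l)<k> of X^j with k > i.  Every element of that
   summand is f.x for a morphism f, and d(f.x) = f.d(x), so it suffices to show that d(x) has
   no component in a summand P(l')<k'> of X^(j+1) with k' <= i + 1, hence k' <= k.  Under the
   isomorphism with P(l')<k'> such a component is a morphism in C_(k'-k)(l', l), which by
   positivity is zero unless k' = k, l' = l and it is a nonzero multiple of the identity of l.
   In that case the component of d between the two summands is an isomorphism, and Gaussian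
   elimination splits off a direct summand P(l)<k> -> P(l)<k> of the complex, contradicting
   minimality. *)

lemma lin_on_mem: "lin_on s1 s2 A B f \<Longrightarrow> x \<in> A \<Longrightarrow> f x \<in> B"
  by (simp add: lin_on_def)

lemma lin_on_add: "lin_on s1 s2 A B f \<Longrightarrow> x \<in> A \<Longrightarrow> y \<in> A \<Longrightarrow> f (x + y) = f x + f y"
  by (simp add: lin_on_def)

lemma lin_on_scale: "lin_on s1 s2 A B f \<Longrightarrow> x \<in> A \<Longrightarrow> f (s1 c x) = s2 c (f x)"
  by (simp add: lin_on_def)

lemma lin_on_zero: "lin_on s1 s2 A B f \<Longrightarrow> 0 \<in> A \<Longrightarrow> f 0 = 0"
  using lin_on_add[of s1 s2 A B f 0 0] by simp

lemma lin_on_comp: "lin_on s1 s2 A B f \<Longrightarrow> lin_on s2 s3 B C g \<Longrightarrow> lin_on s1 s3 A C (\<lambda>x. g (f x))"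
  unfolding lin_on_def by auto

definition dsum_decomposition :: "('b \<Rightarrow> 'v::ab_group_add set) \<Rightarrow> 'b set \<Rightarrow> 'v \<Rightarrow> ('b \<Rightarrow> 'v) \<Rightarrow> bool" where
  "dsum_decomposition F I v u \<longleftrightarrow>
     finite {b. u b \<noteq> 0} \<and> {b. u b \<noteq> 0} \<subseteq> I \<and> (\<forall>b\<in>I. u b \<in> F b) \<and> v = (\<Sum>b | u b \<noteq> 0. u b)"

(* Junk (THE) unless v lies in an internal direct sum of the F b, where the decomposition is unique. *)
definition dsum_component :: "('b \<Rightarrow> 'v::ab_group_add set) \<Rightarrow> 'b set \<Rightarrow> 'v \<Rightarrow> 'b \<Rightarrow> 'v" where
  "dsum_component F I v = (THE u. dsum_decomposition F I v u)"

lemma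
  assumes "dsum_decomposition F I v u"
  shows dsum_decomposition_finite: "finite {b. u b \<noteq> 0}"
    and dsum_decomposition_support: "{b. u b \<noteq> 0} \<subseteq> I"
    and dsum_decomposition_mem: "b \<in> I \<Longrightarrow> u b \<in> F b"
  using assms by (simp_all add: dsum_decomposition_def)

lemma dsum_decomposition_sum:
  assumes "dsum_decomposition F I v u" and "finite J" and "{b. u b \<noteq> 0} \<subseteq> J"
  shows "v = sum u J"
proof -
  have "sum u J = sum u {b. u b \<noteq> 0}" by (rule sum.mono_neutral_right[OF assms(2,3)]) auto
  with assms(1) show ?thesis by (simp add: dsum_decomposition_def)
qed

lemma dsum_decompositionI:
  assumes "finite J" and "{b. u b \<noteq> 0} \<subseteq> J" and "J \<subseteq> I" and "\<And>b. b \<in> I \<Longrightarrow> u b \<in> F b"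
    and "v = sum u J"
  shows "dsum_decomposition F I v u"
proof -
  have "sum u J = sum u {b. u b \<noteq> 0}" by (rule sum.mono_neutral_right[OF assms(1,2)]) auto
  with assms finite_subset[OF assms(2,1)] show ?thesis by (auto simp: dsum_decomposition_def)
qed

lemma dsum_decomposition_add:
  assumes u: "dsum_decomposition F I v u" and u': "dsum_decomposition F I v' u'"
    and F: "\<And>b. b \<in> I \<Longrightarrow> u b + u' b \<in> F b"
  shows "dsum_decomposition F I (v + v') (\<lambda>b. u b + u' b)"
proof -
  define J where "J = {b. u b \<noteq> 0} \<union> {b. u' b \<noteq> 0}"
  have J: "finite J" "J \<subseteq> I" using u u' by (auto simp: J_def dsum_decomposition_def)
  have "v = sum u J" by (rule dsum_decomposition_sum[OF u J(1)]) (auto simp: J_def)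
  moreover have "v' = sum u' J" by (rule dsum_decomposition_sum[OF u' J(1)]) (auto simp: J_def)
  ultimately show ?thesis by (intro dsum_decompositionI[OF J(1) _ J(2) F]) (auto simp: J_def sum.distrib)
qed

lemma
  assumes "internal_dsum s V F I"
  shows internal_dsum_summand_subspace: "b \<in> I \<Longrightarrow> module.subspace s (F b)"
    and internal_dsum_summand_subset: "b \<in> I \<Longrightarrow> F b \<subseteq> V"
    and internal_dsum_span: "V = module.span s (\<Union>b\<in>I. F b)"
    and internal_dsum_independent:
      "finite J \<Longrightarrow> J \<subseteq> I \<Longrightarrow> (\<And>b. b \<in> J \<Longrightarrow> u b \<in> F b) \<Longrightarrow> sum u J = 0 \<Longrightarrow> b \<in> J \<Longrightarrow> u b = 0"
  using assms unfolding internal_dsum_def by blast+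

lemma
  assumes "graded_module sC Cm cmp e sV M act"
  shows graded_module_subspace: "module.subspace sV (M la n)"
    and graded_module_act_lin: "f \<in> Cm la mu i \<Longrightarrow> lin_on sV sV (M la n) (M mu (n + i)) (act la mu f)"
  using assms by (simp_all add: graded_module_def)

lemma
  assumes "gmod_iso sC Cm sV M act sC (Pshift Cm l k) (Pact cmp l) \<phi>"
  shows gmod_iso_Pshift_lin: "lin_on sV sC (M mu n) (Cm l mu (k + n)) (\<phi> mu)"
    and gmod_iso_Pshift_bij: "bij_betw (\<phi> mu) (M mu n) (Cm l mu (k + n))"
    and gmod_iso_Pshift_act:
      "f \<in> Cm la mu i \<Longrightarrow> v \<in> M la n \<Longrightarrow> \<phi> mu (act la mu f v) = cmp l la mu f (\<phi> la v)"
  using assms by (simp_all add: gmod_iso_def gmod_hom_def Pshift_def Pact_def)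

context vector_space
begin

lemma lin_on_diff:
  assumes f: "lin_on scale s2 A B f" and A: "subspace A" and x: "x \<in> A" and y: "y \<in> A"
  shows "f (x - y) = f x - f y"
  using lin_on_add[OF f subspace_diff[OF A x y] y] by (simp add: algebra_simps)

lemma lin_on_sum:
  assumes f: "lin_on scale s2 A B f" and A: "subspace A" and u: "\<And>b. b \<in> J \<Longrightarrow> u b \<in> A"
  shows "f (sum u J) = (\<Sum>b\<in>J. f (u b))"
  using u
proof (induction J rule: infinite_finite_induct)
  case (insert b J)
  have "sum u J \<in> A" using insert.prems by (intro subspace_sum[OF A]) auto
  with insert show ?case by (simp add: lin_on_add[OF f])
qed (use lin_on_zero[OF f subspace_0[OF A]] in auto)

lemma lin_on_span_image:
  assumes f: "lin_on scale scale A B f" and A: "subspace A" and G: "G \<subseteq> A"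
    and T: "subspace T" and fG: "f ` G \<subseteq> T"
  shows "f ` span G \<subseteq> T"
proof
  fix w assume "w \<in> f ` span G"
  then obtain v where v: "v \<in> span G" and w: "w = f v" by blast
  have "v \<in> A \<and> f v \<in> T"
    using v
  proof (induction rule: span_induct_alt)
    case base
    show ?case using subspace_0[OF A] lin_on_zero[OF f] subspace_0[OF T] by simp
  next
    case (step c x y)
    have x: "x \<in> A" using step.hyps G by blast
    have cx: "c *s x \<in> A" by (rule subspace_scale[OF A x])
    have "f (c *s x + y) = c *s f x + f y"
      using lin_on_add[OF f cx] lin_on_scale[OF f x] step.IH by simp
    then show ?case
      using step fG x subspace_add[OF A cx] subspace_add[OF T] subspace_scale[OF T] by auto
  qed
  then show "w \<in> T" using w by simp
qed

lemma lin_on_image_subspace: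
  assumes f: "lin_on scale scale A B f" and S: "subspace S" and SA: "S \<subseteq> A"
  shows "subspace (f ` S)"
proof (rule subspaceI)
  show "0 \<in> f ` S"
    using lin_on_zero[OF f] SA subspace_0[OF S] by (metis image_eqI subsetD)
  show "x + y \<in> f ` S" if x: "x \<in> f ` S" and y: "y \<in> f ` S" for x y
  proof -
    obtain s where "x = f s" "s \<in> S" using x by (rule imageE)
    moreover obtain t where "y = f t" "t \<in> S" using y by (rule imageE)
    ultimately show ?thesis
      using lin_on_add[OF f] SA subspace_add[OF S] by (metis image_eqI subsetD)
  qed
  show "c *s x \<in> f ` S" if x: "x \<in> f ` S" for c x
  proof -
    obtain s where "x = f s" "s \<in> S" using x by (rule imageE)
    then show ?thesis
      using lin_on_scale[OF f] SA subspace_scale[OF S] by (metis image_eqI subsetD)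
  qed
qed

lemma kernel_subspace:
  assumes f: "lin_on scale scale A B f" and A: "subspace A"
  shows "subspace {v \<in> A. f v = 0}"
proof (rule subspaceI)
  show "0 \<in> {v \<in> A. f v = 0}" using subspace_0[OF A] lin_on_zero[OF f] by simp
  show "x + y \<in> {v \<in> A. f v = 0}" if "x \<in> {v \<in> A. f v = 0}" "y \<in> {v \<in> A. f v = 0}" for x y
    using that subspace_add[OF A] lin_on_add[OF f] by simp
  show "c *s x \<in> {v \<in> A. f v = 0}" if "x \<in> {v \<in> A. f v = 0}" for c x
    using that subspace_scale[OF A] lin_on_scale[OF f] by simp
qed

lemma
  assumes A: "subspace A" and S: "subspace S" and SA: "S \<subseteq> A"
    and q: "lin_on scale s2 A T q" and bij: "bij_betw q S T"
  shows kernel_complement_inter: "S \<inter> {v \<in> A. q v = 0} = {0}"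
    and kernel_complement_sum: "A = {y + z |y z. y \<in> S \<and> z \<in> {v \<in> A. q v = 0}}"
proof -
  have q0: "q 0 = 0" by (rule lin_on_zero[OF q subspace_0[OF A]])
  show "S \<inter> {v \<in> A. q v = 0} = {0}"
  proof (intro equalityI subsetI)
    fix v assume "v \<in> S \<inter> {v \<in> A. q v = 0}"
    then have "v \<in> S" "q v = q 0" using q0 by auto
    then show "v \<in> {0}" using bij subspace_0[OF S] unfolding bij_betw_def inj_on_def by blast
  qed (use subspace_0[OF S] subspace_0[OF A] q0 in auto)
  show "A = {y + z |y z. y \<in> S \<and> z \<in> {v \<in> A. q v = 0}}"
  proof (intro equalityI subsetI)
    fix w assume w: "w \<in> A"
    obtain s where s: "s \<in> S" "q s = q w"
      using lin_on_mem[OF q w] bij unfolding bij_betw_def by (metis imageE)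
    have "q (w - s) = 0" using lin_on_diff[OF q A w] s SA by auto
    moreover have "w - s \<in> A" using subspace_diff[OF A w] s SA by auto
    ultimately show "w \<in> {y + z |y z. y \<in> S \<and> z \<in> {v \<in> A. q v = 0}}"
      using s(1) by (intro CollectI exI[of _ s] exI[of _ "w - s"]) simp
  next
    fix w assume "w \<in> {y + z |y z. y \<in> S \<and> z \<in> {v \<in> A. q v = 0}}"
    then show "w \<in> A" using SA subspace_add[OF A] by blast
  qed
qed

lemma bij_betw_if_comp_eq_scaled:
  assumes \<phi>: "bij_betw \<phi> A C" and \<psi>: "bij_betw \<psi> B C" and C: "subspace C"
    and h: "\<And>v. v \<in> A \<Longrightarrow> h v \<in> B" and eq: "\<And>v. v \<in> A \<Longrightarrow> \<psi> (h v) = c *s \<phi> v" and c: "c \<noteq> 0"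
  shows "bij_betw h A B"
proof (rule bij_betw_imageI)
  show "inj_on h A"
  proof (rule inj_onI)
    fix v w assume v: "v \<in> A" and w: "w \<in> A" and "h v = h w"
    then have "c *s \<phi> v = c *s \<phi> w" using eq by metis
    then have "\<phi> v = \<phi> w" using c by simp
    then show "v = w" using \<phi> v w by (auto simp: bij_betw_def inj_on_def)
  qed
  show "h ` A = B"
  proof (intro equalityI subsetI)
    fix w assume w: "w \<in> B"
    have "inverse c *s \<psi> w \<in> C" using subspace_scale[OF C] bij_betw_apply[OF \<psi> w] by blast
    then obtain v where v: "v \<in> A" and \<phi>v: "\<phi> v = inverse c *s \<psi> w"
      using \<phi> unfolding bij_betw_def by (metis imageE)
    have "\<psi> (h v) = \<psi> w" using eq[OF v] \<phi>v c by simp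
    then have "h v = w" using \<psi> h[OF v] w by (auto simp: bij_betw_def inj_on_def)
    then show "w \<in> h ` A" using v by blast
  qed (use h in blast)
qed

lemma internal_dsum_subspace: "internal_dsum scale V F I \<Longrightarrow> subspace V"
  using internal_dsum_span by (metis subspace_span)

lemma dsum_decomposition_unique:
  assumes ds: "internal_dsum scale V F I"
    and u1: "dsum_decomposition F I v u1" and u2: "dsum_decomposition F I v u2"
  shows "u1 = u2"
proof -
  define J where "J = {b. u1 b \<noteq> 0} \<union> {b. u2 b \<noteq> 0}"
  have J: "finite J" "J \<subseteq> I"
    using dsum_decomposition_finite[OF u1] dsum_decomposition_finite[OF u2]
      dsum_decomposition_support[OF u1] dsum_decomposition_support[OF u2]
    by (auto simp: J_def)
  have "v = sum u1 J" by (rule dsum_decomposition_sum[OF u1 J(1)]) (auto simp: J_def)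
  moreover have "v = sum u2 J" by (rule dsum_decomposition_sum[OF u2 J(1)]) (auto simp: J_def)
  ultimately have sum0: "(\<Sum>b\<in>J. u1 b - u2 b) = 0" by (simp add: sum_subtractf)
  have diff: "u1 b - u2 b \<in> F b" if "b \<in> J" for b
    using that J(2) dsum_decomposition_mem[OF u1] dsum_decomposition_mem[OF u2]
      internal_dsum_summand_subspace[OF ds]
    by (blast intro: subspace_diff)
  have eq: "u1 b = u2 b" if "b \<in> J" for b
    using internal_dsum_independent[OF ds J diff sum0 that] by simp
  show ?thesis
  proof
    show "u1 b = u2 b" for b using eq[of b] by (cases "b \<in> J") (auto simp: J_def)
  qed
qed

lemma dsum_decomposition_exists:
  assumes ds: "internal_dsum scale V F I" and v: "v \<in> V"
  shows "\<exists>u. dsum_decomposition F I v u"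
proof -
  note F = internal_dsum_summand_subspace[OF ds]
  have "v \<in> span (\<Union>b\<in>I. F b)" using internal_dsum_span[OF ds] v by simp
  then show ?thesis
  proof (induction rule: span_induct_alt)
    case base
    show ?case by (rule exI, rule dsum_decompositionI[of "{}"]) (auto intro: subspace_0 F)
  next
    case (step c x y)
    then obtain b0 u where b0: "b0 \<in> I" "x \<in> F b0" and u: "dsum_decomposition F I y u" by blast
    let ?x = "\<lambda>b. if b = b0 then c *s x else 0"
    have x: "dsum_decomposition F I (c *s x) ?x"
      using b0 F by (intro dsum_decompositionI[of "{b0}"]) (auto intro: subspace_0 subspace_scale)
    have "dsum_decomposition F I (c *s x + y) (\<lambda>b. ?x b + u b)"
      by (rule dsum_decomposition_add[OF x u])
         (use u F b0 in \<open>auto simp: dsum_decomposition_def intro: subspace_add subspace_scale\<close>)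
    then show ?case by blast
  qed
qed

lemma dsum_decomposition_of_components:
  assumes ds: "internal_dsum scale V F I" and v: "v \<in> V"
  shows "dsum_decomposition F I v (dsum_component F I v)"
proof -
  obtain u where u: "dsum_decomposition F I v u" using dsum_decomposition_exists[OF ds v] by blast
  show ?thesis
    unfolding dsum_component_def by (rule theI[of _ u]) (use u dsum_decomposition_unique[OF ds] in blast)+
qed

lemma dsum_component_eq:
  assumes ds: "internal_dsum scale V F I" and v: "v \<in> V" and u: "dsum_decomposition F I v u"
  shows "dsum_component F I v = u"
  by (rule dsum_decomposition_unique[OF ds dsum_decomposition_of_components[OF ds v] u])

lemma dsum_component_mem:
  assumes "internal_dsum scale V F I" and "v \<in> V" and "b \<in> I"
  shows "dsum_component F I v b \<in> F b"
  using dsum_decomposition_of_components[OF assms(1,2)] assms(3) unfolding dsum_decomposition_def by blast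

lemma dsum_component_outside:
  assumes "internal_dsum scale V F I" and "v \<in> V" and "b \<notin> I"
  shows "dsum_component F I v b = 0"
  using dsum_decomposition_of_components[OF assms(1,2)] assms(3) unfolding dsum_decomposition_def by blast

lemma dsum_component_image:
  assumes dsV: "internal_dsum scale V F I" and dsW: "internal_dsum scale W G I"
    and T: "lin_on scale scale V W T" and TF: "\<And>b x. b \<in> I \<Longrightarrow> x \<in> F b \<Longrightarrow> T x \<in> G b"
    and v: "v \<in> V"
  shows "dsum_component G I (T v) = (\<lambda>b. T (dsum_component F I v b))"
proof (rule dsum_component_eq[OF dsW lin_on_mem[OF T v]])
  let ?u = "dsum_component F I v"
  have u: "dsum_decomposition F I v ?u" by (rule dsum_decomposition_of_components[OF dsV v])
  have V: "subspace V" by (rule internal_dsum_subspace[OF dsV])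
  have uV: "?u b \<in> V" for b
    using dsum_component_mem[OF dsV v] dsum_component_outside[OF dsV v]
      internal_dsum_summand_subset[OF dsV] subspace_0[OF V]
    by (cases "b \<in> I") auto
  have T0: "T 0 = 0" by (rule lin_on_zero[OF T subspace_0[OF V]])
  define J where "J = {b. ?u b \<noteq> 0}"
  have J: "finite J" "J \<subseteq> I" using u by (simp_all add: J_def dsum_decomposition_def)
  have "T v = T (sum ?u J)" using dsum_decomposition_sum[OF u J(1)] by (simp add: J_def)
  also have "\<dots> = (\<Sum>b\<in>J. T (?u b))" by (rule lin_on_sum[OF T V uV])
  finally have Tv: "T v = (\<Sum>b\<in>J. T (?u b))" .
  show "dsum_decomposition G I (T v) (\<lambda>b. T (?u b))"
  proof (rule dsum_decompositionI[OF J(1) _ J(2) _ Tv])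
    show "{b. T (?u b) \<noteq> 0} \<subseteq> J" using T0 by (auto simp: J_def)
    show "T (?u b) \<in> G b" if "b \<in> I" for b by (rule TF[OF that dsum_component_mem[OF dsV v that]])
  qed
qed

lemma dsum_component_lin_on:
  assumes ds: "internal_dsum scale V F I" and b: "b \<in> I"
  shows "lin_on scale scale V (F b) (\<lambda>v. dsum_component F I v b)"
proof -
  have V: "subspace V" by (rule internal_dsum_subspace[OF ds])
  note F = internal_dsum_summand_subspace[OF ds]
  have add: "dsum_component F I (v + w) = (\<lambda>b. dsum_component F I v b + dsum_component F I w b)"
    if "v \<in> V" "w \<in> V" for v w
  proof (rule dsum_component_eq[OF ds subspace_add[OF V that]])
    show "dsum_decomposition F I (v + w) (\<lambda>b. dsum_component F I v b + dsum_component F I w b)"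
      by (rule dsum_decomposition_add[OF dsum_decomposition_of_components[OF ds that(1)]
            dsum_decomposition_of_components[OF ds that(2)]],
          rule subspace_add[OF F dsum_component_mem[OF ds that(1)] dsum_component_mem[OF ds that(2)]])
  qed
  have scale: "dsum_component F I (c *s v) = (\<lambda>b. c *s dsum_component F I v b)" if "v \<in> V" for c v
  proof (rule dsum_component_image[OF ds ds _ _ that])
    show "lin_on scale scale V V (\<lambda>x. c *s x)"
      unfolding lin_on_def using subspace_scale[OF V] scale_right_distrib scale_left_commute by blast
    show "c *s x \<in> F b" if "b \<in> I" "x \<in> F b" for b x by (rule subspace_scale[OF F[OF that(1)] that(2)])
  qed
  show ?thesis
    unfolding lin_on_def
  proof (intro conjI ballI allI)
    show "dsum_component F I v b \<in> F b" if "v \<in> V" for v by (rule dsum_component_mem[OF ds that b])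
    show "dsum_component F I (v + w) b = dsum_component F I v b + dsum_component F I w b"
      if "v \<in> V" "w \<in> V" for v w
      by (simp only: add[OF that])
    show "dsum_component F I (c *s v) b = c *s dsum_component F I v b" if "v \<in> V" for c v
      by (simp only: scale[OF that])
  qed
qed

lemma dsum_mem_span_if_components_vanish:
  assumes ds: "internal_dsum scale V F I" and v: "v \<in> V"
    and vanish: "\<And>b. b \<in> I \<Longrightarrow> \<not> P b \<Longrightarrow> dsum_component F I v b = 0"
  shows "v \<in> span (\<Union>b\<in>{b \<in> I. P b}. F b)"
proof -
  let ?u = "dsum_component F I v"
  have u: "dsum_decomposition F I v ?u" by (rule dsum_decomposition_of_components[OF ds v])
  then have "v = (\<Sum>b | ?u b \<noteq> 0. ?u b)" by (simp add: dsum_decomposition_def)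
  also have "\<dots> \<in> span (\<Union>b\<in>{b \<in> I. P b}. F b)"
    using u vanish by (intro span_sum span_base) (auto simp: dsum_decomposition_def)
  finally show ?thesis .
qed

lemma graded_module_gsubmodule:
  assumes M: "graded_module sC Cm cmp e scale M act" and S: "gsubmodule Cm scale M act S"
  shows "graded_module sC Cm cmp e scale S act"
proof -
  have SM: "\<And>la n. S la n \<subseteq> M la n"
    and closed: "\<And>la mu i n f v. f \<in> Cm la mu i \<Longrightarrow> v \<in> S la n \<Longrightarrow> act la mu f v \<in> S mu (n + i)"
    using S unfolding gsubmodule_def by blast+
  have "lin_on scale scale (S la n) (S mu (n + i)) (act la mu f)" if "f \<in> Cm la mu i" for la mu i n f
    using M that SM closed unfolding graded_module_def lin_on_def by (meson subsetD)
  moreover have "lin_on sC scale (Cm la mu i) (S mu (n + i)) (\<lambda>f. act la mu f v)"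
    if "v \<in> S la n" for la mu i n v
    using M that SM closed unfolding graded_module_def lin_on_def by (meson subsetD)
  ultimately show ?thesis
    using M S SM unfolding graded_module_def gsubmodule_def by (meson subsetD)
qed

lemma gsubmodule_self:
  assumes M: "graded_module sC Cm cmp e scale M act"
  shows "gsubmodule Cm scale M act M"
  unfolding gsubmodule_def
  using graded_module_subspace[OF M] lin_on_mem[OF graded_module_act_lin[OF M]] by blast

lemma gsubmodule_zero:
  assumes M: "graded_module sC Cm cmp e scale M act"
  shows "gsubmodule Cm scale M act (\<lambda>_ _. {0})"
  unfolding gsubmodule_def
proof (intro conjI allI impI)
  fix la n
  show "subspace {0}" by (simp add: subspace_def)
  show "{0} \<subseteq> M la n" using subspace_0[OF graded_module_subspace[OF M]] by simp
next
  fix la mu i n f and v :: 'b assume "f \<in> Cm la mu i" "v \<in> {0}"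
  then show "act la mu f v \<in> {0}"
    using lin_on_zero[OF graded_module_act_lin[OF M] subspace_0[OF graded_module_subspace[OF M]]] by simp
qed

lemma gsubmodule_kernel:
  assumes M: "graded_module sC Cm cmp e scale M act"
    and h: "\<And>mu n. lin_on scale scale (M mu n) (N mu n) (h mu n)"
    and h_act: "\<And>la mu i n f v. f \<in> Cm la mu i \<Longrightarrow> v \<in> M la n \<Longrightarrow>
        h mu (n + i) (act la mu f v) = act' la mu f (h la n v)"
    and act'_0: "\<And>la mu i f. f \<in> Cm la mu i \<Longrightarrow> act' la mu f 0 = 0"
  shows "gsubmodule Cm scale M act (\<lambda>mu n. {v \<in> M mu n. h mu n v = 0})"
  unfolding gsubmodule_def
proof (intro conjI allI impI)
  fix la n
  show "subspace {v \<in> M la n. h la n v = 0}" by (rule kernel_subspace[OF h graded_module_subspace[OF M]])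
  show "{v \<in> M la n. h la n v = 0} \<subseteq> M la n" by blast
next
  fix la mu i n f v assume f: "f \<in> Cm la mu i" and v: "v \<in> {v \<in> M la n. h la n v = 0}"
  have "act la mu f v \<in> M mu (n + i)"
    using lin_on_mem[OF graded_module_act_lin[OF M f]] v by blast
  then show "act la mu f v \<in> {v \<in> M mu (n + i). h mu (n + i) v = 0}"
    using h_act[OF f] act'_0[OF f] v by simp
qed

lemma gsubmodule_image:
  assumes M: "graded_module sC Cm cmp e scale M actM"
    and \<phi>: "gmod_hom sC Cm scale M actM scale N actN \<phi>" and S: "gsubmodule Cm scale M actM S"
  shows "gsubmodule Cm scale N actN (\<lambda>mu n. \<phi> mu ` S mu n)"
  unfolding gsubmodule_def
proof (intro conjI allI impI)
  fix la n
  have lin: "lin_on scale scale (M la n) (N la n) (\<phi> la)" using \<phi> by (simp add: gmod_hom_def)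
  have SM: "S la n \<subseteq> M la n" and Ssub: "subspace (S la n)"
    using S by (simp_all add: gsubmodule_def)
  show "subspace (\<phi> la ` S la n)" by (rule lin_on_image_subspace[OF lin Ssub SM])
  show "\<phi> la ` S la n \<subseteq> N la n" using lin SM by (auto simp: lin_on_def)
next
  fix la mu i n f w assume f: "f \<in> Cm la mu i" and w: "w \<in> \<phi> la ` S la n"
  then obtain v where v: "v \<in> S la n" and w: "w = \<phi> la v" by blast
  have "v \<in> M la n" using S v by (auto simp: gsubmodule_def)
  then have "actN la mu f w = \<phi> mu (actM la mu f v)" using \<phi> f w by (simp add: gmod_hom_def)
  moreover have "actM la mu f v \<in> S mu (n + i)" using S f v by (simp add: gsubmodule_def)
  ultimately show "actN la mu f w \<in> \<phi> mu ` S mu (n + i)" by blast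
qed

lemma gmod_iso_Pshift_eq_0_iff:
  assumes M: "graded_module sC Cm cmp e scale M act"
    and \<phi>: "gmod_iso sC Cm scale M act sC (Pshift Cm l k) (Pact cmp l) \<phi>" and v: "v \<in> M mu n"
  shows "\<phi> mu v = 0 \<longleftrightarrow> v = 0"
proof -
  have M0: "0 \<in> M mu n" by (rule subspace_0[OF graded_module_subspace[OF M]])
  have "\<phi> mu 0 = 0" by (rule lin_on_zero[OF gmod_iso_Pshift_lin[OF \<phi>] M0])
  then show ?thesis
    using inj_onD[OF bij_betw_imp_inj_on[OF gmod_iso_Pshift_bij[OF \<phi>]] _ v M0] by auto
qed

end

locale pos_graded_category =
  fixes sC :: "'k::field \<Rightarrow> 'm::ab_group_add \<Rightarrow> 'm"
    and Cm :: "'o \<Rightarrow> 'o \<Rightarrow> int \<Rightarrow> 'm set"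
    and cmp :: "'o \<Rightarrow> 'o \<Rightarrow> 'o \<Rightarrow> 'm \<Rightarrow> 'm \<Rightarrow> 'm"
    and e :: "'o \<Rightarrow> 'm"
  assumes pos_graded: "pos_graded_cat sC Cm cmp e"
begin

sublocale C: vector_space sC
  using pos_graded unfolding pos_graded_cat_def by metis

lemma Cm_subspace: "C.subspace (Cm la mu i)"
  using pos_graded unfolding pos_graded_cat_def by metis

lemma id_mem: "e la \<in> Cm la la 0"
  using pos_graded unfolding pos_graded_cat_def by metis

lemma cmp_id_right: "f \<in> Cm la mu i \<Longrightarrow> cmp la la mu f (e la) = f"
  using pos_graded unfolding pos_graded_cat_def by metis

lemma cmp_lin_on_right:
  "g \<in> Cm mu nu i' \<Longrightarrow> lin_on sC sC (Cm la mu i) (Cm la nu (i + i')) (\<lambda>f. cmp la mu nu g f)"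
  using pos_graded unfolding pos_graded_cat_def by metis

lemma cmp_scaled_id_right:
  assumes f: "f \<in> Cm la mu i"
  shows "cmp la la mu f (sC c (e la)) = sC c f"
  using lin_on_scale[OF cmp_lin_on_right[OF f, of la 0] id_mem] cmp_id_right[OF f] by simp

lemma nonpos_degree_morphism:
  assumes f: "f \<in> Cm la mu i" and i: "i \<le> 0" and f0: "f \<noteq> 0"
  shows "i = 0 \<and> la = mu \<and> (\<exists>c. c \<noteq> 0 \<and> f = sC c (e la))"
proof -
  have neg: "Cm la mu i = {0}" if "i < 0" using pos_graded that unfolding pos_graded_cat_def by metis
  have off: "Cm la mu 0 = {0}" if "la \<noteq> mu" using pos_graded that unfolding pos_graded_cat_def by metis
  have diag: "Cm la la 0 = range (\<lambda>c. sC c (e la))" using pos_graded unfolding pos_graded_cat_def by metis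
  have "i = 0" using neg f f0 i by force
  moreover have "la = mu" using off f f0 \<open>i = 0\<close> by force
  moreover obtain c where "f = sC c (e la)" using diag f \<open>i = 0\<close> \<open>la = mu\<close> by blast
  ultimately show ?thesis using f0 by fastforce
qed

lemma representable_generator_exists:
  assumes \<phi>: "gmod_iso sC Cm sV M act sC (Pshift Cm l k) (Pact cmp l) \<phi>"
  shows "\<exists>x \<in> M l (- k). \<phi> l x = e l"
  using gmod_iso_Pshift_bij[OF \<phi>, of l "- k"] id_mem unfolding bij_betw_def by force

lemma representable_generated:
  assumes M: "graded_module sC Cm cmp e sV M act"
    and \<phi>: "gmod_iso sC Cm sV M act sC (Pshift Cm l k) (Pact cmp l) \<phi>"
    and x: "x \<in> M l (- k)" and \<phi>x: "\<phi> l x = e l" and g: "g \<in> M mu n"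
  shows "act l mu (\<phi> mu g) x = g"
proof -
  have bij: "bij_betw (\<phi> mu) (M mu n) (Cm l mu (k + n))" by (rule gmod_iso_Pshift_bij[OF \<phi>])
  have f: "\<phi> mu g \<in> Cm l mu (k + n)" by (rule bij_betw_apply[OF bij g])
  have "act l mu (\<phi> mu g) x \<in> M mu (- k + (k + n))"
    by (rule lin_on_mem[OF graded_module_act_lin[OF M f] x])
  moreover have "\<phi> mu (act l mu (\<phi> mu g) x) = \<phi> mu g"
    using gmod_iso_Pshift_act[OF \<phi> f x] \<phi>x cmp_id_right[OF f] by simp
  ultimately show ?thesis using bij g by (simp add: bij_betw_def inj_on_def)
qed

lemma representable_hom_scalar:
  assumes M: "graded_module sC Cm cmp e sV M actM"
    and \<phi>: "gmod_iso sC Cm sV M actM sC (Pshift Cm l k) (Pact cmp l) \<phi>"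
    and \<psi>: "gmod_iso sC Cm sV N actN sC (Pshift Cm l k) (Pact cmp l) \<psi>"
    and h_act: "\<And>la mu i n f v. f \<in> Cm la mu i \<Longrightarrow> v \<in> M la n \<Longrightarrow>
        h mu (n + i) (actM la mu f v) = actN la mu f (h la n v)"
    and x: "x \<in> M l (- k)" and \<phi>x: "\<phi> l x = e l"
    and hx: "h l (- k) x \<in> N l (- k)" and \<psi>hx: "\<psi> l (h l (- k) x) = sC c (e l)"
    and v: "v \<in> M mu n"
  shows "\<psi> mu (h mu n v) = sC c (\<phi> mu v)"
proof -
  define f where "f = \<phi> mu v"
  have f: "f \<in> Cm l mu (k + n)" unfolding f_def by (rule bij_betw_apply[OF gmod_iso_Pshift_bij[OF \<phi>] v])
  have "h mu n v = h mu (- k + (k + n)) (actM l mu f x)"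
    using representable_generated[OF M \<phi> x \<phi>x v] by (simp add: f_def)
  also have "\<dots> = actN l mu f (h l (- k) x)" by (rule h_act[OF f x])
  finally have "\<psi> mu (h mu n v) = cmp l l mu f (sC c (e l))"
    using gmod_iso_Pshift_act[OF \<psi> f hx] \<psi>hx by simp
  then show ?thesis using cmp_scaled_id_right[OF f] by (simp add: f_def)
qed

lemma representable_hom_bij:
  assumes M: "graded_module sC Cm cmp e sV M actM"
    and \<phi>: "gmod_iso sC Cm sV M actM sC (Pshift Cm l k) (Pact cmp l) \<phi>"
    and \<psi>: "gmod_iso sC Cm sV N actN sC (Pshift Cm l k) (Pact cmp l) \<psi>"
    and h: "\<And>mu n v. v \<in> M mu n \<Longrightarrow> h mu n v \<in> N mu n"
    and h_act: "\<And>la mu i n f v. f \<in> Cm la mu i \<Longrightarrow> v \<in> M la n \<Longrightarrow>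
        h mu (n + i) (actM la mu f v) = actN la mu f (h la n v)"
    and x: "x \<in> M l (- k)" and \<phi>x: "\<phi> l x = e l"
    and \<psi>hx: "\<psi> l (h l (- k) x) = sC c (e l)" and c: "c \<noteq> 0"
  shows "bij_betw (h mu n) (M mu n) (N mu n)"
  using gmod_iso_Pshift_bij[OF \<phi>] gmod_iso_Pshift_bij[OF \<psi>] Cm_subspace h
    representable_hom_scalar[OF M \<phi> \<psi> h_act x \<phi>x h[OF x] \<psi>hx] c
  by (rule C.bij_betw_if_comp_eq_scaled)

end

locale graded_complex =
  fixes sC :: "'k::field \<Rightarrow> 'm::ab_group_add \<Rightarrow> 'm"
    and Cm :: "'o \<Rightarrow> 'o \<Rightarrow> int \<Rightarrow> 'm set"
    and cmp :: "'o \<Rightarrow> 'o \<Rightarrow> 'o \<Rightarrow> 'm \<Rightarrow> 'm \<Rightarrow> 'm"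
    and e :: "'o \<Rightarrow> 'm"
    and sV :: "'k \<Rightarrow> 'v::ab_group_add \<Rightarrow> 'v"
    and X :: "int \<Rightarrow> 'o \<Rightarrow> int \<Rightarrow> 'v set"
    and actX :: "int \<Rightarrow> 'o \<Rightarrow> 'o \<Rightarrow> 'm \<Rightarrow> 'v \<Rightarrow> 'v"
    and d :: "int \<Rightarrow> 'o \<Rightarrow> 'v \<Rightarrow> 'v"
  assumes vector_space_V: "vector_space sV"
    and complex: "gcomplex sC Cm cmp e sV X actX d"
begin

sublocale V: vector_space sV by (rule vector_space_V)

lemma graded_module_X: "graded_module sC Cm cmp e sV (X j) (actX j)"
  using complex by (simp add: gcomplex_def)

lemma d_hom: "gmod_hom sC Cm sV (X j) (actX j) sV (X (j + 1)) (actX (j + 1)) (d j)"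
  using complex by (simp add: gcomplex_def)

lemma d_d: "v \<in> X j la n \<Longrightarrow> d (j + 1) la (d j la v) = 0"
  using complex by (simp add: gcomplex_def)

lemma X_subspace: "V.subspace (X j la n)"
  by (rule graded_module_subspace[OF graded_module_X])

lemma zero_mem_X: "0 \<in> X j la n"
  by (rule V.subspace_0[OF X_subspace])

lemma act_lin: "f \<in> Cm la mu i \<Longrightarrow> lin_on sV sV (X j la n) (X j mu (n + i)) (actX j la mu f)"
  by (rule graded_module_act_lin[OF graded_module_X])

lemma act_zero: "f \<in> Cm la mu i \<Longrightarrow> actX j la mu f 0 = 0"
  by (rule lin_on_zero[OF act_lin zero_mem_X])

lemma d_lin: "lin_on sV sV (X j la n) (X (j + 1) la n) (d j la)"
  using d_hom by (simp add: gmod_hom_def)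

lemma d_act: "f \<in> Cm la mu i \<Longrightarrow> v \<in> X j la n \<Longrightarrow> d j mu (actX j la mu f v) = actX (j + 1) la mu f (d j la v)"
  using d_hom by (simp add: gmod_hom_def)

lemma d_zero: "d j la 0 = 0"
  by (rule lin_on_zero[OF d_lin zero_mem_X])

end

text \<open>Gaussian elimination: a bijective component \<open>p \<circ> d : S \<rightarrow> T\<close> of the differential splits
  off \<open>S \<rightarrow> d(S)\<close> as a contractible direct summand, with complement \<open>ker (p \<circ> d)\<close> in degree
  \<open>j\<close> and \<open>ker p\<close> in degree \<open>j + 1\<close>.\<close>

locale bijective_component = graded_complex sC Cm cmp e sV X actX d
  for sC :: "'k::field \<Rightarrow> 'm::ab_group_add \<Rightarrow> 'm"
    and Cm :: "'o \<Rightarrow> 'o \<Rightarrow> int \<Rightarrow> 'm set"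
    and cmp e
    and sV :: "'k \<Rightarrow> 'v::ab_group_add \<Rightarrow> 'v"
    and X actX d +
  fixes j :: int
    and S T :: "'o \<Rightarrow> int \<Rightarrow> 'v set"
    and p :: "'o \<Rightarrow> int \<Rightarrow> 'v \<Rightarrow> 'v"
  assumes S_gsubmodule: "gsubmodule Cm sV (X j) (actX j) S"
    and p_lin: "lin_on sV sV (X (j + 1) mu n) (T mu n) (p mu n)"
    and p_act: "f \<in> Cm la mu i \<Longrightarrow> v \<in> X (j + 1) la n \<Longrightarrow>
        p mu (n + i) (actX (j + 1) la mu f v) = actX (j + 1) la mu f (p la n v)"
    and pd_bij: "bij_betw (\<lambda>v. p mu n (d j mu v)) (S mu n) (T mu n)"
begin

definition contractible_part :: "int \<Rightarrow> 'o \<Rightarrow> int \<Rightarrow> 'v set" where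
  "contractible_part = (\<lambda>_ _ _. {0})(j := S, j + 1 := \<lambda>mu n. d j mu ` S mu n)"

definition complement_part :: "int \<Rightarrow> 'o \<Rightarrow> int \<Rightarrow> 'v set" where
  "complement_part = X(j := \<lambda>mu n. {v \<in> X j mu n. p mu n (d j mu v) = 0},
                      j + 1 := \<lambda>mu n. {v \<in> X (j + 1) mu n. p mu n v = 0})"

lemma S_subset: "S mu n \<subseteq> X j mu n" and S_subspace: "V.subspace (S mu n)"
  using S_gsubmodule by (simp_all add: gsubmodule_def)

lemma pd_lin: "lin_on sV sV (X j mu n) (T mu n) (\<lambda>v. p mu n (d j mu v))"
  by (rule lin_on_comp[OF d_lin p_lin])

lemma d_bij: "bij_betw (d j mu) (S mu n) (d j mu ` S mu n)"
  using pd_bij[of mu n] by (auto simp: bij_betw_def inj_on_def)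

lemma p_bij: "bij_betw (p mu n) (d j mu ` S mu n) (T mu n)"
  using bij_betw_comp_iff[OF d_bij, where f' = "p mu n" and A'' = "T mu n"] pd_bij[of mu n]
  by (simp add: comp_def)

lemma dS_gsubmodule: "gsubmodule Cm sV (X (j + 1)) (actX (j + 1)) (\<lambda>mu n. d j mu ` S mu n)"
  by (rule V.gsubmodule_image[OF graded_module_X d_hom S_gsubmodule])

lemma gsubmodule_parts:
  "gsubmodule Cm sV (X j') (actX j') (contractible_part j') \<and>
   gsubmodule Cm sV (X j') (actX j') (complement_part j')"
proof -
  have "gsubmodule Cm sV (X j) (actX j) (\<lambda>mu n. {v \<in> X j mu n. p mu n (d j mu v) = 0})"
  proof (rule V.gsubmodule_kernel[where h = "\<lambda>mu n v. p mu n (d j mu v)" and act' = "actX (j + 1)"])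
    show "p mu (n + i) (d j mu (actX j la mu f v)) = actX (j + 1) la mu f (p la n (d j la v))"
      if "f \<in> Cm la mu i" "v \<in> X j la n" for la mu i n f v
      using d_act[OF that] p_act[OF that(1) lin_on_mem[OF d_lin that(2)]] by simp
  qed (rule graded_module_X pd_lin act_zero)+
  moreover have "gsubmodule Cm sV (X (j + 1)) (actX (j + 1)) (\<lambda>mu n. {v \<in> X (j + 1) mu n. p mu n v = 0})"
    by (rule V.gsubmodule_kernel[where h = p and act' = "actX (j + 1)"])
       (rule graded_module_X p_lin p_act act_zero; assumption)+
  ultimately show ?thesis
    using S_gsubmodule dS_gsubmodule V.gsubmodule_zero[OF graded_module_X]
      V.gsubmodule_self[OF graded_module_X]
    by (simp add: contractible_part_def complement_part_def)
qed

lemma complementary_parts: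
  "contractible_part j' mu n \<inter> complement_part j' mu n = {0} \<and>
   X j' mu n = {y + z |y z. y \<in> contractible_part j' mu n \<and> z \<in> complement_part j' mu n}"
proof -
  consider "j' = j" | "j' = j + 1" | "j' \<noteq> j" "j' \<noteq> j + 1" by blast
  then show ?thesis
  proof cases
    case 1
    then show ?thesis
      using V.kernel_complement_inter[OF X_subspace S_subspace S_subset pd_lin pd_bij]
        V.kernel_complement_sum[OF X_subspace S_subspace S_subset pd_lin pd_bij]
      by (simp add: contractible_part_def complement_part_def)
  next
    case 2
    have dS: "V.subspace (d j mu ` S mu n)" "d j mu ` S mu n \<subseteq> X (j + 1) mu n"
      using dS_gsubmodule by (simp_all add: gsubmodule_def)
    show ?thesis
      using 2 V.kernel_complement_inter[OF X_subspace dS p_lin p_bij]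
        V.kernel_complement_sum[OF X_subspace dS p_lin p_bij]
      by (simp add: contractible_part_def complement_part_def)
  next
    case 3
    then show ?thesis using zero_mem_X
      by (auto simp: contractible_part_def complement_part_def)
  qed
qed

lemma d_contractible_part:
  assumes v: "v \<in> contractible_part j' mu n"
  shows "d j' mu v \<in> contractible_part (j' + 1) mu n"
proof -
  consider "j' = j" | "j' = j + 1" | "j' \<noteq> j" "j' \<noteq> j + 1" by blast
  then show ?thesis
  proof cases
    case 2
    then obtain s where "s \<in> S mu n" "v = d j mu s" using v by (auto simp: contractible_part_def)
    then have "d j' mu v = 0" using 2 d_d S_subset by blast
    then show ?thesis using 2 by (simp add: contractible_part_def)
  next
    case 3
    then show ?thesis using v d_zero V.subspace_0[OF S_subspace]
      by (auto simp: contractible_part_def)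
  qed (use v in \<open>simp add: contractible_part_def\<close>)
qed

lemma d_complement_part:
  assumes v: "v \<in> complement_part j' mu n"
  shows "d j' mu v \<in> complement_part (j' + 1) mu n"
proof -
  have vX: "v \<in> X j' mu n" using v by (auto simp: complement_part_def split: if_splits)
  then have dv: "d j' mu v \<in> X (j' + 1) mu n" by (rule lin_on_mem[OF d_lin])
  consider "j' = j" | "j' + 1 = j" | "j' \<noteq> j" "j' + 1 \<noteq> j" by blast
  then show ?thesis
  proof cases
    case 1
    then show ?thesis using v dv by (simp add: complement_part_def)
  next
    case 2
    then have "p mu n (d j mu (d j' mu v)) = 0"
      using vX d_d lin_on_zero[OF p_lin zero_mem_X] by fastforce
    then show ?thesis using 2 dv by (simp add: complement_part_def)
  next
    case 3
    then show ?thesis using dv by (simp add: complement_part_def)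
  qed
qed

theorem not_minimal:
  assumes nz: "S mu n \<noteq> {0}"
  shows "\<not> minimal_complex Cm sV X actX d"
  unfolding minimal_complex_def not_not
proof (rule exI[of _ contractible_part], rule exI[of _ complement_part], rule exI[of _ j],
    intro conjI allI impI)
  show "gsubmodule Cm sV (X j') (actX j') (contractible_part j')"
    and "gsubmodule Cm sV (X j') (actX j') (complement_part j')" for j'
    using gsubmodule_parts by blast+
  show "contractible_part j' mu n \<inter> complement_part j' mu n = {0}"
    and "X j' mu n = {y + z |y z. y \<in> contractible_part j' mu n \<and> z \<in> complement_part j' mu n}"
    for j' mu n
    using complementary_parts by blast+
  show "d j' mu v \<in> contractible_part (j' + 1) mu n" if "v \<in> contractible_part j' mu n" for j' mu n v
    using that by (rule d_contractible_part)
  show "d j' mu v \<in> complement_part (j' + 1) mu n" if "v \<in> complement_part j' mu n" for j' mu n v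
    using that by (rule d_complement_part)
  show "contractible_part j' mu n = {0}" if "j' \<noteq> j \<and> j' \<noteq> j + 1" for j' mu n
    using that by (simp add: contractible_part_def)
  show "bij_betw (d j mu) (contractible_part j mu n) (contractible_part (j + 1) mu n)" for mu n
    using d_bij by (simp add: contractible_part_def)
  show "\<exists>mu n. contractible_part j mu n \<noteq> {0}"
    using nz by (auto simp: contractible_part_def)
qed

end

locale decomposed_complex =
  pos_graded_category sC Cm cmp e + graded_complex sC Cm cmp e sV X actX d
  for sC :: "'k::field \<Rightarrow> 'm::ab_group_add \<Rightarrow> 'm"
    and Cm :: "'o \<Rightarrow> 'o \<Rightarrow> int \<Rightarrow> 'm set"
    and cmp e
    and sV :: "'k \<Rightarrow> 'v::ab_group_add \<Rightarrow> 'v"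
    and X actX d +
  fixes B :: "int \<Rightarrow> 'b set"
    and S :: "int \<Rightarrow> 'b \<Rightarrow> 'o \<Rightarrow> int \<Rightarrow> 'v set"
    and lab :: "int \<Rightarrow> 'b \<Rightarrow> 'o"
    and sh :: "int \<Rightarrow> 'b \<Rightarrow> int"
  assumes summands: "\<forall>j. \<forall>b\<in>B j. gsubmodule Cm sV (X j) (actX j) (S j b) \<and>
        (\<exists>\<phi>. gmod_iso sC Cm sV (S j b) (actX j) sC (Pshift Cm (lab j b) (sh j b)) (Pact cmp (lab j b)) \<phi>)"
    and dsum: "\<forall>j mu n. internal_dsum sV (X j mu n) (\<lambda>b. S j b mu n) (B j)"
begin

abbreviation summand_iso :: "int \<Rightarrow> 'b \<Rightarrow> ('o \<Rightarrow> 'v \<Rightarrow> 'm) \<Rightarrow> bool" where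
  "summand_iso j b \<phi> \<equiv>
     gmod_iso sC Cm sV (S j b) (actX j) sC (Pshift Cm (lab j b) (sh j b)) (Pact cmp (lab j b)) \<phi>"

(* The graded pieces X j mu n may overlap inside 'v, so components are taken degreewise. *)
definition summand_component :: "int \<Rightarrow> 'o \<Rightarrow> int \<Rightarrow> 'v \<Rightarrow> 'b \<Rightarrow> 'v" where
  "summand_component j mu n v = dsum_component (\<lambda>b. S j b mu n) (B j) v"

lemma summand_gsubmodule: "b \<in> B j \<Longrightarrow> gsubmodule Cm sV (X j) (actX j) (S j b)"
  using summands by blast

lemma summand_graded_module: "b \<in> B j \<Longrightarrow> graded_module sC Cm cmp e sV (S j b) (actX j)"
  by (rule V.graded_module_gsubmodule[OF graded_module_X summand_gsubmodule])

lemma summand_iso_exists: "b \<in> B j \<Longrightarrow> \<exists>\<phi>. summand_iso j b \<phi>"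
  using summands by blast

lemma summand_subset: "b \<in> B j \<Longrightarrow> S j b mu n \<subseteq> X j mu n"
  using summand_gsubmodule by (simp add: gsubmodule_def)

lemma summand_dsum: "internal_dsum sV (X j mu n) (\<lambda>b. S j b mu n) (B j)"
  using dsum by blast

lemma summand_component_mem: "v \<in> X j mu n \<Longrightarrow> b \<in> B j \<Longrightarrow> summand_component j mu n v b \<in> S j b mu n"
  unfolding summand_component_def by (rule V.dsum_component_mem[OF summand_dsum])

lemma summand_component_lin: "b \<in> B j \<Longrightarrow> lin_on sV sV (X j mu n) (S j b mu n) (\<lambda>v. summand_component j mu n v b)"
  unfolding summand_component_def by (rule V.dsum_component_lin_on[OF summand_dsum])

lemma summand_component_act:
  assumes f: "f \<in> Cm la mu i" and v: "v \<in> X j la n"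
  shows "summand_component j mu (n + i) (actX j la mu f v) b = actX j la mu f (summand_component j la n v b)"
proof -
  have "dsum_component (\<lambda>b. S j b mu (n + i)) (B j) (actX j la mu f v) = (\<lambda>b. actX j la mu f (summand_component j la n v b))"
    unfolding summand_component_def
    using summand_gsubmodule f
    by (intro V.dsum_component_image[OF summand_dsum summand_dsum act_lin[OF f] _ v]) (auto simp: gsubmodule_def)
  then show ?thesis by (simp add: summand_component_def)
qed

lemma d_summand_component_act:
  assumes f: "f \<in> Cm la mu i" and v: "v \<in> X j la n"
  shows "summand_component (j + 1) mu (n + i) (d j mu (actX j la mu f v)) b' =
    actX (j + 1) la mu f (summand_component (j + 1) la n (d j la v) b')"
  using d_act[OF f v] summand_component_act[OF f lin_on_mem[OF d_lin v]] by simp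

lemma d_summand_component_bij:
  assumes b: "b \<in> B j" and b': "b' \<in> B (j + 1)"
    and lab: "lab (j + 1) b' = lab j b" and sh: "sh (j + 1) b' = sh j b"
    and \<phi>: "summand_iso j b \<phi>" and \<psi>: "summand_iso (j + 1) b' \<psi>"
    and x: "x \<in> S j b (lab j b) (- sh j b)" and \<phi>x: "\<phi> (lab j b) x = e (lab j b)"
    and \<psi>dx: "\<psi> (lab j b) (summand_component (j + 1) (lab j b) (- sh j b) (d j (lab j b) x) b') = sC c (e (lab j b))"
    and c: "c \<noteq> 0"
  shows "bij_betw (\<lambda>v. summand_component (j + 1) mu n (d j mu v) b') (S j b mu n) (S (j + 1) b' mu n)"
proof (rule representable_hom_bij[where h = "\<lambda>mu n v. summand_component (j + 1) mu n (d j mu v) b'"])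
  show "graded_module sC Cm cmp e sV (S j b) (actX j)" by (rule summand_graded_module[OF b])
  show "gmod_iso sC Cm sV (S (j + 1) b') (actX (j + 1)) sC (Pshift Cm (lab j b) (sh j b)) (Pact cmp (lab j b)) \<psi>"
    using \<psi> by (simp only: lab sh)
  show "summand_component (j + 1) mu n (d j mu v) b' \<in> S (j + 1) b' mu n" if "v \<in> S j b mu n" for mu n v
    using that summand_subset[OF b] by (blast intro: summand_component_mem[OF lin_on_mem[OF d_lin] b'])
  show "summand_component (j + 1) mu (n + i) (d j mu (actX j la mu f v)) b' =
      actX (j + 1) la mu f (summand_component (j + 1) la n (d j la v) b')"
    if "f \<in> Cm la mu i" "v \<in> S j b la n" for la mu i n f v
    using that summand_subset[OF b] by (blast intro: d_summand_component_act)
qed (fact \<phi> x \<phi>x \<psi>dx c)+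

lemma generator_component_vanishes:
  assumes mini: "minimal_complex Cm sV X actX d"
    and b: "b \<in> B j" and \<phi>: "summand_iso j b \<phi>"
    and x: "x \<in> S j b (lab j b) (- sh j b)" and \<phi>x: "\<phi> (lab j b) x = e (lab j b)"
    and b': "b' \<in> B (j + 1)" and sh': "sh (j + 1) b' \<le> sh j b"
  shows "summand_component (j + 1) (lab j b) (- sh j b) (d j (lab j b) x) b' = 0" (is "?y = 0")
proof (rule ccontr)
  assume y0: "?y \<noteq> 0"
  obtain \<psi> where \<psi>: "summand_iso (j + 1) b' \<psi>" using summand_iso_exists[OF b'] by blast
  have y: "?y \<in> S (j + 1) b' (lab j b) (- sh j b)"
    using x summand_subset[OF b] by (blast intro: summand_component_mem[OF lin_on_mem[OF d_lin] b'])
  have "\<psi> (lab j b) ?y \<in> Cm (lab (j + 1) b') (lab j b) (sh (j + 1) b' + - sh j b)"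
    by (rule bij_betw_apply[OF gmod_iso_Pshift_bij[OF \<psi>] y])
  moreover have \<psi>y0: "\<psi> (lab j b) ?y \<noteq> 0"
    using V.gmod_iso_Pshift_eq_0_iff[OF summand_graded_module[OF b'] \<psi> y] y0 by blast
  ultimately obtain c where lab: "lab (j + 1) b' = lab j b" and sh: "sh (j + 1) b' = sh j b"
    and c: "c \<noteq> 0" and \<psi>y: "\<psi> (lab j b) ?y = sC c (e (lab j b))"
    using nonpos_degree_morphism sh' by fastforce
  have "x \<noteq> 0"
    using V.gmod_iso_Pshift_eq_0_iff[OF summand_graded_module[OF b] \<phi> x] \<phi>x \<psi>y \<psi>y0 by auto
  then have nz: "S j b (lab j b) (- sh j b) \<noteq> {0}" using x by blast
  have "bijective_component sC Cm cmp e sV X actX d j (S j b) (S (j + 1) b')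
      (\<lambda>mu n v. summand_component (j + 1) mu n v b')"
    using summand_gsubmodule[OF b] summand_component_lin[OF b'] summand_component_act
      d_summand_component_bij[OF b b' lab sh \<phi> \<psi> x \<phi>x \<psi>y c]
    by (intro bijective_component.intro graded_complex_axioms bijective_component_axioms.intro)
  from bijective_component.not_minimal[OF this nz] mini show False ..
qed

lemma d_summand_in_part_gt:
  assumes mini: "minimal_complex Cm sV X actX d"
    and b: "b \<in> B j" and i: "i < sh j b" and g: "g \<in> S j b mu n"
  shows "d j mu g \<in> part_gt sV B S sh (j + 1) (i + 1) mu n"
proof -
  obtain \<phi> where \<phi>: "summand_iso j b \<phi>" using summand_iso_exists[OF b] by blast
  obtain x where x: "x \<in> S j b (lab j b) (- sh j b)" and \<phi>x: "\<phi> (lab j b) x = e (lab j b)"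
    using representable_generator_exists[OF \<phi>] by blast
  define f where "f = \<phi> mu g"
  have f: "f \<in> Cm (lab j b) mu (sh j b + n)"
    unfolding f_def by (rule bij_betw_apply[OF gmod_iso_Pshift_bij[OF \<phi>] g])
  have xX: "x \<in> X j (lab j b) (- sh j b)" using x summand_subset[OF b] by blast
  have dx: "d j (lab j b) x \<in> X (j + 1) (lab j b) (- sh j b)" by (rule lin_on_mem[OF d_lin xX])
  have gX: "g \<in> X j mu n" using g summand_subset[OF b] by blast
  have dg: "d j mu g = actX (j + 1) (lab j b) mu f (d j (lab j b) x)"
    using representable_generated[OF summand_graded_module[OF b] \<phi> x \<phi>x g] d_act[OF f xX]
    by (simp add: f_def)
  have "d j mu g \<in> V.span (\<Union>b'\<in>{b' \<in> B (j + 1). i + 1 < sh (j + 1) b'}. S (j + 1) b' mu n)"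
  proof (rule V.dsum_mem_span_if_components_vanish[OF summand_dsum lin_on_mem[OF d_lin gX]])
    fix b' assume b': "b' \<in> B (j + 1)" and "\<not> i + 1 < sh (j + 1) b'"
    then have "sh (j + 1) b' \<le> sh j b" using i by simp
    then have "summand_component (j + 1) (lab j b) (- sh j b) (d j (lab j b) x) b' = 0"
      by (rule generator_component_vanishes[OF mini b \<phi> x \<phi>x b'])
    then show "dsum_component (\<lambda>b. S (j + 1) b mu n) (B (j + 1)) (d j mu g) b' = 0"
      using summand_component_act[OF f dx, of b'] act_zero[OF f] dg by (simp add: summand_component_def)
  qed
  then show ?thesis by (simp add: part_gt_def)
qed

lemma d_part_gt:
  assumes mini: "minimal_complex Cm sV X actX d"
  shows "d j mu ` part_gt sV B S sh j i mu n \<subseteq> part_gt sV B S sh (j + 1) (i + 1) mu n"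
  unfolding part_gt_def
proof (rule V.lin_on_span_image[OF d_lin X_subspace _ V.subspace_span])
  show "(\<Union>b\<in>{b \<in> B j. i < sh j b}. S j b mu n) \<subseteq> X j mu n" using summand_subset by blast
  show "d j mu ` (\<Union>b\<in>{b \<in> B j. i < sh j b}. S j b mu n)
      \<subseteq> V.span (\<Union>b\<in>{b \<in> B (j + 1). i + 1 < sh (j + 1) b}. S (j + 1) b mu n)"
    using d_summand_in_part_gt[OF mini] by (fastforce simp: part_gt_def)
qed

end

theorem lemma3p2:
  fixes sC :: "'k::field \<Rightarrow> 'm::ab_group_add \<Rightarrow> 'm"
    and Cm :: "'o \<Rightarrow> 'o \<Rightarrow> int \<Rightarrow> 'm set"
    and cmp :: "'o \<Rightarrow> 'o \<Rightarrow> 'o \<Rightarrow> 'm \<Rightarrow> 'm \<Rightarrow> 'm"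
    and e :: "'o \<Rightarrow> 'm"
    and sV :: "'k \<Rightarrow> 'v::ab_group_add \<Rightarrow> 'v"
    and X :: "int \<Rightarrow> 'o \<Rightarrow> int \<Rightarrow> 'v set"
    and actX :: "int \<Rightarrow> 'o \<Rightarrow> 'o \<Rightarrow> 'm \<Rightarrow> 'v \<Rightarrow> 'v"
    and d :: "int \<Rightarrow> 'o \<Rightarrow> 'v \<Rightarrow> 'v"
    and B :: "int \<Rightarrow> 'b set"
    and S :: "int \<Rightarrow> 'b \<Rightarrow> 'o \<Rightarrow> int \<Rightarrow> 'v set"
    and lab :: "int \<Rightarrow> 'b \<Rightarrow> 'o"
    and sh :: "int \<Rightarrow> 'b \<Rightarrow> int"
  assumes cat: "pos_graded_cat sC Cm cmp e"
    and vsV: "vector_space sV"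
    and cx: "gcomplex sC Cm cmp e sV X actX d"
    and mini: "minimal_complex Cm sV X actX d"
    and summands: "\<forall>j. \<forall>b\<in>B j. gsubmodule Cm sV (X j) (actX j) (S j b) \<and>
        (\<exists>\<phi>. gmod_iso sC Cm sV (S j b) (actX j) sC (Pshift Cm (lab j b) (sh j b))
                       (Pact cmp (lab j b)) \<phi>)"
    and dsum: "\<forall>j mu n. internal_dsum sV (X j mu n) (\<lambda>b. S j b mu n) (B j)"
  shows "\<forall>i j mu n. d j mu ` part_gt sV B S sh j i mu n \<subseteq> part_gt sV B S sh (j + 1) (i + 1) mu n"
proof -
  interpret decomposed_complex sC Cm cmp e sV X actX d B S lab sh
    using cat vsV cx summands dsum
    by (intro decomposed_complex.intro pos_graded_category.intro graded_complex.intro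
        decomposed_complex_axioms.intro)
  show ?thesis using d_part_gt[OF mini] by blast
qed

end
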